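(* Let $\lambda>0$ and $0<\nu<2$. Let $u_\nu$ be the solution of $\frac{\partial^{\nu}u}{\partial t^{\nu}}=\lambda^2\frac{\partial^2u}{\partial x^2}$, $x\in\mathbb{R}$, $t>0$, with $u(x,0)=\delta(x)$ if $0<\nu\le1$ and $u(x,0)=\delta(x)$, $u_t(x,0)=0$ if $1<\nu<2$. Then \begin{align*} u_\nu(x,t)&=\frac{1}{2\pi\lambda t^{\nu/2}}\int_0^{+\infty}e^{-w}w^{\nu/2-1}e^{-\frac{|x|w^{\nu/2}}{\lambda t^{\nu/2}}\cos\frac{\nu\pi}{2}}\sin\!\left(\frac{\nu\pi}{2}-\frac{|x|w^{\nu/2}}{\lambda t^{\nu/2}}\sin\frac{\nu\pi}{2}\right)dw\\ &=\frac{1}{\nu\pi}\int_0^{+\infty}e^{-|x|y\cos\frac{\nu\pi}{2}-(\lambda y)^{2/\nu}t}\sin\!\left(\frac{\nu\pi}{2}-|x|y\sin\frac{\nu\pi}{2}\right)dy. \end{align*}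
   Context: Fractional derivatives are in the Dzherbashyan–Caputo sense: for $m-1<\nu<m$, $\frac{\partial^{\nu}u}{\partial t^{\nu}}(x,t)=\frac{1}{\Gamma(m-\nu)}\int_0^t (t-s)^{m-\nu-1}\frac{\partial^m u}{\partial s^m}(x,s)\,ds$; for $\nu=m$ the ordinary derivative. The solution is $u_\nu(x,t)=\frac{1}{2\lambda t^{\nu/2}}\sum_{k\ge0}\frac{(-|x|/(\lambda t^{\nu/2}))^k}{k!\,\Gamma(-\nu k/2+1-\nu/2)}$. *)

theory Defs
  imports "HOL-Analysis.Analysis"
begin

text \<open>The fundamental solution u_nu(x,t) of the time-fractional diffusion equation,
  given by the series from the paper. The reciprocal Gamma function rGamma
  (entire, zero at the poles of Gamma) is used for 1/Gamma.\<close>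
definition u_nu :: "real \<Rightarrow> real \<Rightarrow> real \<Rightarrow> real \<Rightarrow> real" where
  "u_nu lam \<nu> x t =
     1 / (2 * lam * t powr (\<nu>/2)) *
     (\<Sum>k. (- \<bar>x\<bar> / (lam * t powr (\<nu>/2))) ^ k / fact k
              * rGamma (- \<nu> * real k / 2 + 1 - \<nu>/2))"

end

theory Submission
  imports Defs
begin

text \<open>Put a = \<nu>/2 and z = |x|/(\<lambda> t^a). Expanding exp(-z w^a e^{i\<pi>a}) in powers of z and
  integrating term by term against e^{-w} w^{a-1}, the k-th term yields \<Gamma>(a(k+1)) sin(\<pi>a(k+1)),
  which the reflection formula turns into \<pi>/\<Gamma>(1 - a(k+1)): \<pi> times the k-th coefficient of the
  series defining u_nu. Termwise integration is dominated convergence with the majorant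
  e^{-w} w^{a-1} exp(z w^a), integrable because a < 1. The second representation follows by the
  substitution y = w^a/(\<lambda> t^a).\<close>

lemma
  fixes s :: real assumes s: "s > 0"
  shows set_integrable_Gamma_real: "set_integrable lborel {0<..} (\<lambda>w. exp (- w) * w powr (s - 1))"
    and set_integral_Gamma_real: "(LBINT w:{0<..}. exp (- w) * w powr (s - 1)) = Gamma s"
proof -
  have eq: "(\<lambda>t. indicator {0..} t * t powr (s - 1) / exp t)
      = (\<lambda>w. indicator {0<..} w * (exp (- w) * w powr (s - 1)))"
    by (rule ext) (auto simp: indicator_def exp_minus field_simps)
  have nn: "(\<integral>\<^sup>+t. ennreal (indicator {0..} t * t powr (s - 1) / exp t) \<partial>lborel) = ennreal (Gamma s)"
    using Gamma_conv_nn_integral_real[OF s] by simp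
  have "integrable lborel (\<lambda>t. indicator {0..} t * t powr (s - 1) / exp t)"
    by (rule integrableI_nonneg) (use nn in \<open>auto simp: indicator_def\<close>)
  moreover have "(\<integral>t. indicator {0..} t * t powr (s - 1) / exp t \<partial>lborel) = Gamma s"
    using nn Gamma_real_pos[OF s] by (subst integral_eq_nn_integral) (auto simp: indicator_def)
  ultimately show "set_integrable lborel {0<..} (\<lambda>w. exp (- w) * w powr (s - 1))"
      and "(LBINT w:{0<..}. exp (- w) * w powr (s - 1)) = Gamma s"
    unfolding eq by (simp_all add: set_integrable_def set_lebesgue_integral_def)
qed

lemma set_integrable_Gamma_scaled:
  fixes s b :: real assumes s: "s > 0" and b: "b > 0"
  shows "set_integrable lborel {0<..} (\<lambda>w. exp (- (b * w)) * w powr (s - 1))"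
proof -
  have "integrable lborel (\<lambda>w. indicator {0<..} (b * w) * (exp (- (b * w)) * (b * w) powr (s - 1)))"
    using lborel_integrable_real_affine[of _ b 0] set_integrable_Gamma_real[OF s] b
    by (simp add: set_integrable_def)
  then have "integrable lborel (\<lambda>w. b powr (1 - s) * (indicator {0<..} (b * w) * (exp (- (b * w)) * (b * w) powr (s - 1))))"
    by (rule integrable_mult_right)
  moreover have "b powr (1 - s) * (indicator {0<..} (b * w) * (exp (- (b * w)) * (b * w) powr (s - 1)))
      = indicator {0<..} w * (exp (- (b * w)) * w powr (s - 1))" for w
  proof (cases "w > 0")
    case True
    then have "b powr (1 - s) * (b * w) powr (s - 1) = w powr (s - 1)"
      using b by (simp add: powr_mult powr_add[symmetric])
    then show ?thesis using True b by (simp add: indicator_def algebra_simps)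
  qed (use b in \<open>simp add: indicator_def zero_less_mult_iff\<close>)
  ultimately show ?thesis by (simp add: set_integrable_def)
qed

lemma rGamma_one_minus_real:
  fixes s :: real assumes "s > 0"
  shows "rGamma (1 - s) = Gamma s * sin (pi * s) / pi"
proof -
  have "complex_of_real (rGamma s * rGamma (1 - s)) = complex_of_real (sin (pi * s) / pi)"
    using rGamma_reflection_complex[of "complex_of_real s"]
    by (simp add: rGamma_complex_of_real[symmetric] sin_of_real[symmetric])
  then have "rGamma s * rGamma (1 - s) = sin (pi * s) / pi" by (simp only: of_real_eq_iff)
  moreover have "Gamma s * rGamma s = 1"
    using Gamma_real_pos[OF assms] by (simp add: Gamma_def)
  ultimately show ?thesis
    by (metis mult.assoc mult_1 times_divide_eq_right)
qed

lemma exp_series_sin_multiple_sums: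
  fixes r \<theta> :: real
  shows "(\<lambda>k. (- r) ^ k / fact k * sin (\<theta> * (real k + 1))) sums (exp (- r * cos \<theta>) * sin (\<theta> - r * sin \<theta>))"
proof -
  have "(\<lambda>k. cis \<theta> * ((- (of_real r * cis \<theta>)) ^ k /\<^sub>R fact k)) sums (cis \<theta> * exp (- (of_real r * cis \<theta>)))"
    by (rule sums_mult[OF exp_converges])
  from sums_Im[OF this]
  have "(\<lambda>k. Im (cis \<theta> * ((- (of_real r * cis \<theta>)) ^ k /\<^sub>R fact k))) sums Im (cis \<theta> * exp (- (of_real r * cis \<theta>)))" .
  moreover have "Im (cis \<theta> * ((- (of_real r * cis \<theta>)) ^ k /\<^sub>R fact k)) = (- r) ^ k / fact k * sin (\<theta> * (real k + 1))" for k
  proof -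
    have "cis (\<theta> * (real k + 1)) = cis \<theta> * cis (real k * \<theta>)" by (simp add: cis_mult algebra_simps)
    then have "cis \<theta> * ((- (of_real r * cis \<theta>)) ^ k /\<^sub>R fact k) = of_real ((- r) ^ k / fact k) * cis (\<theta> * (real k + 1))"
      by (simp add: power_mult_distrib Complex.DeMoivre scaleR_conv_of_real power_minus' field_simps)
    moreover have "Im (of_real q * cis \<phi>) = q * sin \<phi>" for q \<phi> by simp
    ultimately show ?thesis by (simp only:)
  qed
  moreover have "Im (cis \<theta> * exp (- (of_real r * cis \<theta>))) = exp (- r * cos \<theta>) * sin (\<theta> - r * sin \<theta>)"
  proof -
    have "cis \<theta> * exp (- (of_real r * cis \<theta>)) = exp (\<i> * of_real \<theta> - of_real r * cis \<theta>)"
      by (simp add: exp_diff cis_conv_exp exp_minus field_simps)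
    also have "\<i> * of_real \<theta> - of_real r * cis \<theta> = Complex (- r * cos \<theta>) (\<theta> - r * sin \<theta>)"
      by (simp add: complex_eq_iff)
    finally show ?thesis by (simp add: Im_exp)
  qed
  ultimately show ?thesis by (simp only:)
qed

lemma exp_series_sin_multiple_partial_sum_le:
  fixes r \<theta> :: real assumes r: "r \<ge> 0"
  shows "\<bar>\<Sum>k<n. (- r) ^ k / fact k * sin (\<theta> * (real k + 1))\<bar> \<le> exp r"
proof -
  have "\<bar>\<Sum>k<n. (- r) ^ k / fact k * sin (\<theta> * (real k + 1))\<bar> \<le> (\<Sum>k<n. r ^ k / fact k)"
  proof (rule order_trans[OF sum_abs sum_mono])
    fix k
    have "r ^ k * \<bar>sin (\<theta> * (real k + 1))\<bar> \<le> r ^ k"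
      using r by (intro mult_left_le) auto
    from divide_right_mono[OF this, of "fact k"]
    show "\<bar>(- r) ^ k / fact k * sin (\<theta> * (real k + 1))\<bar> \<le> r ^ k / fact k"
      using r by (simp add: abs_mult power_abs)
  qed
  also have "\<dots> \<le> exp r"
  proof -
    have "(\<lambda>k. r ^ k / fact k) sums exp r"
      using exp_converges[of r] by (simp add: divide_inverse mult.commute)
    then show ?thesis
      using sum_le_suminf[of "\<lambda>k. r ^ k / fact k" "{..<n}"] r by (simp add: sums_iff)
  qed
  finally show ?thesis .
qed

lemma powr_le_linear_plus_const:
  fixes a z \<epsilon> :: real assumes a: "0 < a" "a < 1" and z: "z \<ge> 0" and \<epsilon>: "\<epsilon> > 0"
  obtains C where "\<And>w. w \<ge> 0 \<Longrightarrow> z * w powr a \<le> \<epsilon> * w + C"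
proof
  define M where "M = (z / \<epsilon> + 1) powr (1 / (1 - a))"
  have "z / \<epsilon> + 1 > 0" using z \<epsilon> by (simp add: add_nonneg_pos)
  then have M: "M > 0" "M powr (1 - a) = z / \<epsilon> + 1"
    using a by (simp_all add: M_def powr_powr)
  fix w :: real assume w: "w \<ge> 0"
  show "z * w powr a \<le> \<epsilon> * w + z * M powr a"
  proof (cases "w \<le> M")
    case True
    then have "z * w powr a \<le> z * M powr a"
      using w a z by (intro mult_left_mono powr_mono2) auto
    then show ?thesis using w \<epsilon> by (simp add: add_increasing)
  next
    case False
    have "z \<le> \<epsilon> * M powr (1 - a)" using M \<epsilon> by (simp add: field_simps)
    also have "\<dots> \<le> \<epsilon> * w powr (1 - a)"
      using False M a \<epsilon> by (intro mult_left_mono powr_mono2) auto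
    finally have "z * w powr a \<le> \<epsilon> * w powr (1 - a) * w powr a"
      by (rule mult_right_mono) simp
    also have "\<dots> = \<epsilon> * w"
      using False M by (simp add: mult.assoc powr_add[symmetric])
    finally show ?thesis using M z by (simp add: add_increasing2)
  qed
qed

lemma set_integrable_Gamma_exp_powr:
  fixes a z :: real assumes a: "0 < a" "a < 1" and z: "z \<ge> 0"
  shows "set_integrable lborel {0<..} (\<lambda>w. exp (- w) * w powr (a - 1) * exp (z * w powr a))"
proof -
  obtain C where C: "\<And>w. w \<ge> 0 \<Longrightarrow> z * w powr a \<le> 1/2 * w + C"
    using powr_le_linear_plus_const[OF a z, of "1/2"] by auto
  have "set_integrable lborel {0<..} (\<lambda>w. exp C * (exp (- (1/2 * w)) * w powr (a - 1)))"
    using set_integrable_Gamma_scaled[of a "1/2"] a by simp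
  then show ?thesis
  proof (rule set_integrable_bound)
    show "set_borel_measurable lborel {0<..} (\<lambda>w. exp (- w) * w powr (a - 1) * exp (z * w powr a))"
      unfolding set_borel_measurable_def by measurable
  next
    have "exp (- w) * w powr (a - 1) * exp (z * w powr a) \<le> exp C * (exp (- (1/2 * w)) * w powr (a - 1))"
      if "w > 0" for w
    proof -
      have "exp (- w) * exp (z * w powr a) \<le> exp C * exp (- (1/2 * w))"
        using C[of w] that by (simp flip: exp_add)
      then have "exp (- w) * exp (z * w powr a) * w powr (a - 1) \<le> exp C * exp (- (1/2 * w)) * w powr (a - 1)"
        by (rule mult_right_mono) simp
      then show ?thesis by (simp add: ac_simps)
    qed
    then show "AE w in lborel. w \<in> {0<..} \<longrightarrow>
        norm (exp (- w) * w powr (a - 1) * exp (z * w powr a)) \<le> norm (exp C * (exp (- (1/2 * w)) * w powr (a - 1)))"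
      by (intro AE_I2) auto
  qed
qed

lemma sums_set_integral_dominated:
  fixes f :: "nat \<Rightarrow> 'a \<Rightarrow> 'b::{banach, second_countable_topology}"
  assumes f: "\<And>k. set_integrable M S (f k)"
    and G: "set_integrable M S G"
    and F: "set_borel_measurable M S F"
    and bound: "\<And>n x. x \<in> S \<Longrightarrow> norm (\<Sum>k<n. f k x) \<le> G x"
    and sums: "\<And>x. x \<in> S \<Longrightarrow> (\<lambda>k. f k x) sums F x"
  shows "set_integrable M S F"
    and "(\<lambda>k. LINT x:S|M. f k x) sums (LINT x:S|M. F x)"
proof -
  define s where "s n x = (\<Sum>k<n. indicator S x *\<^sub>R f k x)" for n x
  have s_integrable: "integrable M (s n)" for n
    unfolding s_def by (intro Bochner_Integration.integrable_sum) (use f in \<open>simp add: set_integrable_def\<close>)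
  have s_integral: "integral\<^sup>L M (s n) = (\<Sum>k<n. LINT x:S|M. f k x)" for n
    unfolding s_def set_lebesgue_integral_def
    by (intro Bochner_Integration.integral_sum) (use f in \<open>simp add: set_integrable_def\<close>)
  have s_bound: "AE x in M. norm (s n x) \<le> indicator S x *\<^sub>R G x" for n
    using bound by (intro AE_I2) (simp add: s_def indicator_def flip: scaleR_sum_right)
  have s_lim: "AE x in M. (\<lambda>n. s n x) \<longlonglongrightarrow> indicator S x *\<^sub>R F x"
    using sums by (intro AE_I2) (simp add: s_def indicator_def sums_def flip: scaleR_sum_right)
  note dominated = integrable_dominated_convergence integral_dominated_convergence
  note dominated = dominated[OF F[unfolded set_borel_measurable_def] borel_measurable_integrable[OF s_integrable]
      G[unfolded set_integrable_def] s_lim s_bound]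
  then show "set_integrable M S F" and "(\<lambda>k. LINT x:S|M. f k x) sums (LINT x:S|M. F x)"
    by (simp_all add: set_integrable_def set_lebesgue_integral_def sums_def s_integral)
qed

lemma rGamma_series_sums_set_integral:
  fixes a z :: real
  assumes a: "0 < a" "a < 1" and z: "z \<ge> 0"
  defines "F \<equiv> \<lambda>w. exp (- w) * w powr (a - 1) * exp (- (z * w powr a) * cos (pi * a))
                    * sin (pi * a - z * w powr a * sin (pi * a))"
  shows "set_integrable lborel {0<..} F"
    and "(\<lambda>k. (- z) ^ k / fact k * rGamma (1 - a * (real k + 1))) sums ((LBINT w:{0<..}. F w) / pi)"
proof -
  define f where "f k w = (- z) ^ k / fact k * sin (pi * a * (real k + 1))
                          * (exp (- w) * w powr (a * (real k + 1) - 1))" for k w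
  have f_eq: "f k w = exp (- w) * w powr (a - 1) * ((- (z * w powr a)) ^ k / fact k * sin (pi * a * (real k + 1)))"
    if "w > 0" for k w
  proof -
    have "w powr (a * (real k + 1) - 1) = w powr (a - 1) * (w powr a) ^ k"
      using that by (simp add: powr_power powr_add[symmetric] algebra_simps)
    then show ?thesis by (simp add: f_def power_mult_distrib power_minus')
  qed
  have f_sums: "(\<lambda>k. f k w) sums F w" if "w > 0" for w
    using sums_mult[OF exp_series_sin_multiple_sums[of "z * w powr a" "pi * a"], of "exp (- w) * w powr (a - 1)"]
    by (simp add: f_eq[OF that] F_def mult.assoc)
  have f_integrable: "set_integrable lborel {0<..} (f k)"
    and f_integral: "(LBINT w:{0<..}. f k w) = pi * ((- z) ^ k / fact k * rGamma (1 - a * (real k + 1)))" for k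
  proof -
    have k: "a * (real k + 1) > 0" using a by simp
    show "set_integrable lborel {0<..} (f k)"
      unfolding f_def by (intro set_integrable_mult_right set_integrable_Gamma_real k)
    have "(LBINT w:{0<..}. f k w) = (- z) ^ k / fact k * sin (pi * a * (real k + 1)) * Gamma (a * (real k + 1))"
      unfolding f_def set_integral_Gamma_real[OF k, symmetric] by simp
    also have "\<dots> = pi * ((- z) ^ k / fact k * rGamma (1 - a * (real k + 1)))"
      unfolding rGamma_one_minus_real[OF k] by (simp add: field_simps)
    finally show "(LBINT w:{0<..}. f k w) = pi * ((- z) ^ k / fact k * rGamma (1 - a * (real k + 1)))" .
  qed
  have f_bound: "norm (\<Sum>k<n. f k w) \<le> exp (- w) * w powr (a - 1) * exp (z * w powr a)" if "w > 0" for n w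
  proof -
    have "(\<Sum>k<n. f k w)
        = exp (- w) * w powr (a - 1) * (\<Sum>k<n. (- (z * w powr a)) ^ k / fact k * sin (pi * a * (real k + 1)))"
      by (simp add: f_eq[OF that] sum_distrib_left)
    then have "norm (\<Sum>k<n. f k w)
        = exp (- w) * w powr (a - 1) * \<bar>\<Sum>k<n. (- (z * w powr a)) ^ k / fact k * sin (pi * a * (real k + 1))\<bar>"
      by (simp add: abs_mult)
    also have "\<dots> \<le> exp (- w) * w powr (a - 1) * exp (z * w powr a)"
      using z by (intro mult_left_mono exp_series_sin_multiple_partial_sum_le) auto
    finally show ?thesis .
  qed
  have F_measurable: "set_borel_measurable lborel {0<..} F"
    unfolding set_borel_measurable_def F_def by measurable
  note series = sums_set_integral_dominated[OF f_integrable set_integrable_Gamma_exp_powr[OF a z] F_measurable f_bound f_sums]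
  then show "set_integrable lborel {0<..} F" by simp
  from sums_divide[OF series(2), of pi]
  show "(\<lambda>k. (- z) ^ k / fact k * rGamma (1 - a * (real k + 1))) sums ((LBINT w:{0<..}. F w) / pi)"
    by (simp add: f_integral)
qed

lemma filterlim_powr_at_top:
  fixes p :: real assumes "p > 0"
  shows "filterlim (\<lambda>x. x powr p) at_top at_top"
proof (subst filterlim_cong[OF refl refl])
  show "LIM x at_top. exp (p * ln x) :> at_top"
    by (rule filterlim_compose[OF exp_at_top filterlim_tendsto_pos_mult_at_top[OF tendsto_const]])
       (simp_all add: ln_at_top assms)
  show "eventually (\<lambda>x. x powr p = exp (p * ln x)) at_top"
    using eventually_gt_at_top[of 0] by eventually_elim (simp add: powr_def)
qed

lemma set_integral_powr_substitution:
  fixes H :: "real \<Rightarrow> real" and a c :: real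
  assumes a: "a > 0" and c: "c > 0" and H: "continuous_on {0<..} H"
    and integrable: "set_integrable lborel {0<..} (\<lambda>w. w powr (a - 1) * H (w powr a / c))"
  shows "set_integrable lborel {0<..} H"
    and "(LBINT y:{0<..}. H y) = a / c * (LBINT w:{0<..}. w powr (a - 1) * H (w powr a / c))"
proof -
  define g where "g w = w powr a / c" for w :: real
  define g' where "g' w = a * w powr (a - 1) / c" for w :: real
  have g_deriv: "(g has_real_derivative g' w) (at w)" if "0 < ereal w" for w
    unfolding g_def g'_def using that c by (auto intro!: derivative_eq_intros)
  have g'_cont: "isCont g' w" if "0 < ereal w" for w
    unfolding g'_def using that c by (auto intro!: continuous_intros)
  have H_cont: "isCont H (g w)" if "0 < ereal w" for w
    using H that c by (simp add: g_def continuous_on_eq_continuous_at)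
  have g'_nonneg: "0 \<le> g' w" for w
    using a c by (simp add: g'_def)
  have g_0: "((ereal \<circ> g \<circ> real_of_ereal) \<longlongrightarrow> 0) (at_right 0)"
  proof -
    have "((\<lambda>w::real. w powr a) \<longlongrightarrow> 0) (at_right 0)"
      using eventually_at_right_less[of "0::real"]
      by (intro tendsto_zero_powrI[OF tendsto_ident_at tendsto_const _ a]) (auto elim: eventually_mono)
    then show ?thesis
      unfolding zero_ereal_def ereal_tendsto_simps g_def by (rule tendsto_divide_zero)
  qed
  have g_infinity: "((ereal \<circ> g \<circ> real_of_ereal) \<longlongrightarrow> \<infinity>) (at_left \<infinity>)"
  proof -
    have "filterlim (\<lambda>w. 1 / c * w powr a) at_top at_top"
      using c by (intro filterlim_tendsto_pos_mult_at_top[OF tendsto_const _ filterlim_powr_at_top[OF a]]) simp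
    then show ?thesis
      unfolding ereal_tendsto_simps g_def by simp
  qed
  have g_subst: "g' w * f (g w) = a / c * (w powr (a - 1) * f (w powr a / c))" for f :: "real \<Rightarrow> real" and w
    by (simp add: g_def g'_def)
  have einterval: "einterval 0 \<infinity> = {0<..}"
    by (auto simp: einterval_def zero_ereal_def)
  have "set_integrable lborel (einterval 0 \<infinity>) (\<lambda>y. \<bar>H y\<bar>)"
  proof (rule interval_integral_substitution_nonneg(1)[where g = g and g' = g'])
    show "set_integrable lborel (einterval 0 \<infinity>) (\<lambda>w. \<bar>H (g w)\<bar> * g' w)"
    proof -
      have "(\<lambda>w. \<bar>H (g w)\<bar> * g' w) = (\<lambda>w. a / c * \<bar>w powr (a - 1) * H (w powr a / c)\<bar>)"
        using a c by (simp add: fun_eq_iff g_def g'_def abs_mult)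
      then show ?thesis
        using set_integrable_abs[OF integrable] unfolding einterval by simp
    qed
  qed (use g_deriv H_cont g'_cont g'_nonneg g_0 g_infinity in \<open>auto intro: continuous_intros\<close>)
  moreover have "set_borel_measurable lborel {0<..} H"
    using set_measurable_continuous_on[OF _ H] by (simp add: set_borel_measurable_def)
  ultimately show H_integrable: "set_integrable lborel {0<..} H"
    unfolding einterval by (simp add: set_integrable_abs_iff)
  have "(LBINT y=0..\<infinity>. H y) = (LBINT w=0..\<infinity>. g' w *\<^sub>R H (g w))"
    using g_deriv H_cont g'_cont g'_nonneg g_0 g_infinity H_integrable integrable
    by (intro interval_integral_substitution_integrable) (simp_all add: einterval g_subst[where f = H])
  then show "(LBINT y:{0<..}. H y) = a / c * (LBINT w:{0<..}. w powr (a - 1) * H (w powr a / c))"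
    by (simp add: zero_ereal_def interval_integral_to_infinity_eq g_subst[where f = H])
qed

lemma u_nu_integral_representation_w:
  fixes lam \<nu> x t :: real
  assumes lam: "lam > 0" and \<nu>: "0 < \<nu>" "\<nu> < 2" and t: "t > 0"
  defines "F \<equiv> \<lambda>w. exp (- w) * w powr (\<nu>/2 - 1)
            * exp (- (\<bar>x\<bar> * w powr (\<nu>/2) / (lam * t powr (\<nu>/2))) * cos (\<nu>*pi/2))
            * sin (\<nu>*pi/2 - \<bar>x\<bar> * w powr (\<nu>/2) / (lam * t powr (\<nu>/2)) * sin (\<nu>*pi/2))"
  shows "set_integrable lborel {0<..} F"
    and "u_nu lam \<nu> x t = 1 / (2 * pi * lam * t powr (\<nu>/2)) * (LBINT w:{0<..}. F w)"
proof -
  define a where "a = \<nu> / 2"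
  define c where "c = lam * t powr (\<nu>/2)"
  have a: "0 < a" "a < 1" and c: "c > 0"
    using \<nu> lam t by (simp_all add: a_def c_def)
  have z: "\<bar>x\<bar> / c \<ge> 0" using c by simp
  have "(\<lambda>w. exp (- w) * w powr (a - 1) * exp (- (\<bar>x\<bar> / c * w powr a) * cos (pi * a))
             * sin (pi * a - \<bar>x\<bar> / c * w powr a * sin (pi * a))) = F"
    by (simp add: F_def a_def c_def fun_eq_iff mult_ac)
  note series = rGamma_series_sums_set_integral[OF a z, unfolded this]
  then show "set_integrable lborel {0<..} F" by simp
  have terms: "(- \<bar>x\<bar> / c) ^ k / fact k * rGamma (- \<nu> * real k / 2 + 1 - \<nu>/2)
      = (- (\<bar>x\<bar> / c)) ^ k / fact k * rGamma (1 - a * (real k + 1))" for k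
  proof -
    have "- \<nu> * real k / 2 + 1 - \<nu>/2 = 1 - a * (real k + 1)" by (simp add: a_def field_simps)
    then show ?thesis by (simp only: minus_divide_left)
  qed
  have "(\<Sum>k. (- \<bar>x\<bar> / c) ^ k / fact k * rGamma (- \<nu> * real k / 2 + 1 - \<nu>/2)) = (LBINT w:{0<..}. F w) / pi"
    unfolding terms using series(2) by (simp add: sums_iff)
  then show "u_nu lam \<nu> x t = 1 / (2 * pi * lam * t powr (\<nu>/2)) * (LBINT w:{0<..}. F w)"
    unfolding u_nu_def c_def[symmetric] by simp
qed

lemma u_nu_integral_representation_y:
  fixes lam \<nu> x t :: real
  assumes lam: "lam > 0" and \<nu>: "0 < \<nu>" "\<nu> < 2" and t: "t > 0"
  defines "H \<equiv> \<lambda>y. exp (- \<bar>x\<bar> * y * cos (\<nu>*pi/2) - (lam * y) powr (2/\<nu>) * t)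
            * sin (\<nu>*pi/2 - \<bar>x\<bar> * y * sin (\<nu>*pi/2))"
  shows "set_integrable lborel {0<..} H"
    and "u_nu lam \<nu> x t = 1 / (\<nu> * pi) * (LBINT y:{0<..}. H y)"
proof -
  define a where "a = \<nu> / 2"
  define c where "c = lam * t powr (\<nu>/2)"
  define F where "F = (\<lambda>w. exp (- w) * w powr (\<nu>/2 - 1)
            * exp (- (\<bar>x\<bar> * w powr (\<nu>/2) / (lam * t powr (\<nu>/2))) * cos (\<nu>*pi/2))
            * sin (\<nu>*pi/2 - \<bar>x\<bar> * w powr (\<nu>/2) / (lam * t powr (\<nu>/2)) * sin (\<nu>*pi/2)))"
  have a: "0 < a" and c: "c > 0"
    using \<nu> lam t by (simp_all add: a_def c_def)
  note F = u_nu_integral_representation_w[OF lam \<nu> t, of x, folded F_def]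
  have H_F: "w powr (a - 1) * H (w powr a / c) = F w" if w: "w > 0" for w
  proof -
    have "lam * (w powr a / c) = (w / t) powr a"
      using lam t w by (simp add: c_def a_def powr_divide)
    then have "(lam * (w powr a / c)) powr (2 / \<nu>) * t = w"
      using \<nu> t w by (simp add: powr_powr a_def)
    then have "H (w powr a / c) = exp (- w) * exp (- (\<bar>x\<bar> * w powr a / c) * cos (\<nu>*pi/2))
        * sin (\<nu>*pi/2 - \<bar>x\<bar> * w powr a / c * sin (\<nu>*pi/2))"
      by (simp add: H_def exp_diff exp_minus field_simps)
    then show ?thesis
      unfolding F_def a_def c_def by (simp only: mult_ac)
  qed
  have "continuous_on {0<..} H"
    unfolding H_def using lam by (intro continuous_intros) auto
  moreover have "set_integrable lborel {0<..} (\<lambda>w. w powr (a - 1) * H (w powr a / c))"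
    by (rule set_integrable_cong[THEN iffD2, OF refl refl _ F(1)]) (simp add: H_F)
  moreover have "(LBINT w:{0<..}. w powr (a - 1) * H (w powr a / c)) = (LBINT w:{0<..}. F w)"
    using H_F by (intro set_lebesgue_integral_cong) auto
  ultimately have H: "set_integrable lborel {0<..} H" "(LBINT y:{0<..}. H y) = a / c * (LBINT w:{0<..}. F w)"
    using set_integral_powr_substitution[OF a c] by auto
  then show "set_integrable lborel {0<..} H" by simp
  show "u_nu lam \<nu> x t = 1 / (\<nu> * pi) * (LBINT y:{0<..}. H y)"
    using F(2) H(2) a c by (simp add: a_def c_def field_simps)
qed

theorem theorem5p3:
  fixes lam \<nu> x t :: real
  assumes "lam > 0" and "0 < \<nu>" and "\<nu> < 2" and "t > 0"
  shows "set_integrable lborel {0<..} (\<lambda>w. exp (- w) * w powr (\<nu>/2 - 1)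
            * exp (- (\<bar>x\<bar> * w powr (\<nu>/2) / (lam * t powr (\<nu>/2))) * cos (\<nu>*pi/2))
            * sin (\<nu>*pi/2 - \<bar>x\<bar> * w powr (\<nu>/2) / (lam * t powr (\<nu>/2)) * sin (\<nu>*pi/2)))
    \<and> u_nu lam \<nu> x t =
        1 / (2 * pi * lam * t powr (\<nu>/2)) *
        (LBINT w:{0<..}. exp (- w) * w powr (\<nu>/2 - 1)
            * exp (- (\<bar>x\<bar> * w powr (\<nu>/2) / (lam * t powr (\<nu>/2))) * cos (\<nu>*pi/2))
            * sin (\<nu>*pi/2 - \<bar>x\<bar> * w powr (\<nu>/2) / (lam * t powr (\<nu>/2)) * sin (\<nu>*pi/2)))
    \<and> set_integrable lborel {0<..} (\<lambda>y. exp (- \<bar>x\<bar> * y * cos (\<nu>*pi/2) - (lam * y) powr (2/\<nu>) * t)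
            * sin (\<nu>*pi/2 - \<bar>x\<bar> * y * sin (\<nu>*pi/2)))
    \<and> u_nu lam \<nu> x t =
        1 / (\<nu> * pi) *
        (LBINT y:{0<..}. exp (- \<bar>x\<bar> * y * cos (\<nu>*pi/2) - (lam * y) powr (2/\<nu>) * t)
            * sin (\<nu>*pi/2 - \<bar>x\<bar> * y * sin (\<nu>*pi/2)))"
proof -
  note w = u_nu_integral_representation_w[OF assms, of x]
  note y = u_nu_integral_representation_y[OF assms, of x]
  show ?thesis using w y by blast
qed

end
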